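(* Let $x_0\in\mathcal{M}_0$ and let $r>0$ with $r<\lambda(x)$. Then $u^{-1}\big(\mathcal{M}\cap\bar B(x,r)\big)$ is connected.
   Context: $E=\mathbb{R}^n$. $\mathcal{M}_0$ is a compact $d$-dimensional $\mathcal{C}^2$ manifold, $u:\mathcal{M}_0\to E$ an immersion, $\mathcal{M}=u(\mathcal{M}_0)$; $\mathcal{M}_0$ carries the metric induced by $u$, whose second fundamental form has operator norm at most $\rho>0$ everywhere. For $x_0,y_0\in\mathcal{M}_0$ write $x=u(x_0)$, $y=u(y_0)$ and $T_y\mathcal{M}=d_{y_0}u(T_{y_0}\mathcal{M}_0)$. Normal reach: $\Lambda(x_0)=\{y_0\in\mathcal{M}_0:\ y_0\neq x_0,\ x-y\perp T_y\mathcal{M}\}$ and $\lambda_0(x_0)=\inf_{y_0\in\Lambda(x_0)}\|x-y\|$; one writes $\lambda(x)$ for $\lambda_0(x_0)$ (if $x$ has several preimages, every preimage has normal reach $0$). $\bar B(x,r)$ is the closed Euclidean ball. *)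

theory Defs
  imports "HOL-Analysis.Analysis" "HOL-Library.Extended_Real"
begin

definition has_2nd_derivs ::
  "'a::euclidean_space set \<Rightarrow> ('a \<Rightarrow> 'b::euclidean_space)
   \<Rightarrow> ('a \<Rightarrow> 'a \<Rightarrow>\<^sub>L 'b) \<Rightarrow> ('a \<Rightarrow> 'a \<Rightarrow>\<^sub>L ('a \<Rightarrow>\<^sub>L 'b)) \<Rightarrow> bool" where
  "has_2nd_derivs S f f' f'' \<longleftrightarrow>
     (\<forall>x\<in>S. (f has_derivative blinfun_apply (f' x)) (at x)) \<and>
     (\<forall>x\<in>S. (f' has_derivative blinfun_apply (f'' x)) (at x)) \<and>
     continuous_on S f''"

definition C2_on :: "'a::euclidean_space set \<Rightarrow> ('a \<Rightarrow> 'b::euclidean_space) \<Rightarrow> bool" where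
  "C2_on S f \<longleftrightarrow> open S \<and> (\<exists>f' f''. has_2nd_derivs S f f' f'')"

definition C2_atlas ::
  "'m::t2_space set \<Rightarrow> ('m set \<times> ('m \<Rightarrow> 'd::euclidean_space)) set \<Rightarrow> bool" where
  "C2_atlas M0 A \<longleftrightarrow>
     (\<forall>(V,\<phi>)\<in>A. openin (top_of_set M0) V \<and> open (\<phi> ` V) \<and>
                 homeomorphism V (\<phi> ` V) \<phi> (inv_into V \<phi>)) \<and>
     M0 \<subseteq> \<Union> (fst ` A) \<and>
     (\<forall>(V,\<phi>)\<in>A. \<forall>(W,\<psi>)\<in>A. C2_on (\<phi> ` (V \<inter> W)) (\<psi> \<circ> inv_into V \<phi>))"

text \<open>Standing assumptions: M0 is a compact C^2 manifold (given by the atlas A),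
  u is a C^2 immersion, and the second fundamental form of the induced metric has
  operator norm at most rho everywhere: in a chart psi = u o phi^-1, the normal
  component of D^2 psi(p)(v,w), i.e. its distance to the tangent space range(D psi(p)),
  is at most rho |D psi(p) v| |D psi(p) w|.\<close>

definition C2_immersion_curv_bound ::
  "'m::t2_space set \<Rightarrow> ('m set \<times> ('m \<Rightarrow> 'd::euclidean_space)) set
   \<Rightarrow> ('m \<Rightarrow> 'e::euclidean_space) \<Rightarrow> real \<Rightarrow> bool" where
  "C2_immersion_curv_bound M0 A u \<rho> \<longleftrightarrow>
     compact M0 \<and> C2_atlas M0 A \<and>
     (\<forall>(V,\<phi>)\<in>A. \<exists>\<psi>' \<psi>''. has_2nd_derivs (\<phi> ` V) (u \<circ> inv_into V \<phi>) \<psi>' \<psi>'' \<and>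
        (\<forall>p\<in>\<phi> ` V. inj (blinfun_apply (\<psi>' p)) \<and>
           (\<forall>v w. infdist (\<psi>'' p v w) (range (\<psi>' p))
                    \<le> \<rho> * norm (\<psi>' p v) * norm (\<psi>' p w))))"

text \<open>Tangent space T_y M = d_{y0} u (T_{y0} M0), computed in any chart around y0
  (all charts give the same space).\<close>

definition tangent_space ::
  "('m set \<times> ('m \<Rightarrow> 'd::euclidean_space)) set \<Rightarrow> ('m \<Rightarrow> 'e::euclidean_space) \<Rightarrow> 'm \<Rightarrow> 'e set" where
  "tangent_space A u y0 =
     \<Union> {range (frechet_derivative (u \<circ> inv_into V \<phi>) (at (\<phi> y0))) | V \<phi>. (V,\<phi>) \<in> A \<and> y0 \<in> V}"

definition normal_set ::
  "'m set \<Rightarrow> ('m set \<times> ('m \<Rightarrow> 'd::euclidean_space)) set \<Rightarrow> ('m \<Rightarrow> 'e::euclidean_space) \<Rightarrow> 'm \<Rightarrow> 'm set" where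
  "normal_set M0 A u x0 =
     {y0 \<in> M0. y0 \<noteq> x0 \<and> (\<forall>t\<in>tangent_space A u y0. (u x0 - u y0) \<bullet> t = 0)}"

text \<open>Normal reach lambda_0(x0) = inf of |x - y| over normal_set; +infinity if empty.\<close>

definition normal_reach ::
  "'m set \<Rightarrow> ('m set \<times> ('m \<Rightarrow> 'd::euclidean_space)) set \<Rightarrow> ('m \<Rightarrow> 'e::euclidean_space) \<Rightarrow> 'm \<Rightarrow> ereal" where
  "normal_reach M0 A u x0 = (INF y0\<in>normal_set M0 A u x0. ereal (dist (u x0) (u y0)))"

end

theory Submission
  imports Defs
begin

(* If the preimage S of the closed ball were disconnected, some nonempty clopen part F of S
   would miss x0. By compactness a point y of F is closest to x. As |x - y| <= r < lambda(x),
   y is not a normal point, so x - y has a nonzero component along some tangent vector at y;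
   following that direction in a chart gives a connected arc through y on which the distance
   to x drops. The arc stays in the ball, hence in F, contradicting the choice of y. *)

lemma connectedI_by_descent:
  fixes f :: "'a::topological_space \<Rightarrow> 'b::linorder_topology"
  assumes "compact S" "continuous_on S f" "x0 \<in> S"
    and descent: "\<And>y. y \<in> S \<Longrightarrow> y \<noteq> x0 \<Longrightarrow>
                   \<exists>K. connected K \<and> K \<subseteq> S \<and> y \<in> K \<and> (\<exists>z\<in>K. f z < f y)"
  shows "connected S"
proof -
  have empty: "T = {}"
    if clopen: "openin (top_of_set S) T" "closedin (top_of_set S) T" and "x0 \<notin> T" for T
  proof (rule ccontr)
    assume "T \<noteq> {}"
    have "T \<subseteq> S" using clopen(2) by (rule closedin_imp_subset)
    have "compact T" using closedin_compact[OF \<open>compact S\<close> clopen(2)] .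
    moreover have "continuous_on T f" using assms(2) \<open>T \<subseteq> S\<close> by (rule continuous_on_subset)
    ultimately obtain y where "y \<in> T" and y_min: "\<forall>z\<in>T. f y \<le> f z"
      using continuous_attains_inf \<open>T \<noteq> {}\<close> by metis
    then have "y \<in> S" "y \<noteq> x0" using \<open>T \<subseteq> S\<close> \<open>x0 \<notin> T\<close> by auto
    then obtain K z where K: "connected K" "K \<subseteq> S" "y \<in> K" and "z \<in> K" "f z < f y"
      using descent by blast
    have "K \<subseteq> T \<or> disjnt K T"
      using K clopen by (intro connectedin_clopen_cases) (simp_all add: connectedin_subtopology)
    then have "z \<in> T" using \<open>y \<in> K\<close> \<open>y \<in> T\<close> \<open>z \<in> K\<close> by (auto simp: disjnt_iff)
    then show False using y_min \<open>f z < f y\<close> by (simp add: not_le[symmetric])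
  qed
  show ?thesis
    unfolding connected_clopen
  proof (intro allI impI)
    fix T assume T: "openin (top_of_set S) T \<and> closedin (top_of_set S) T"
    show "T = {} \<or> T = S"
    proof (cases "x0 \<in> T")
      case True
      have "openin (top_of_set S) (S - T)" "closedin (top_of_set S) (S - T)"
        using T by (simp_all add: openin_diff closedin_diff)
      then have "S - T = {}"
        using \<open>x0 \<in> T\<close> by (intro empty) auto
      then show ?thesis using T closedin_imp_subset by blast
    next
      case False
      then show ?thesis using T empty by simp
    qed
  qed
qed

lemma eventually_dist_decreasing_along:
  fixes \<psi> :: "'a::real_normed_vector \<Rightarrow> 'b::real_inner"
  assumes deriv: "(\<psi> has_derivative D) (at p)" and descent: "(\<psi> p - c) \<bullet> D v < 0"
  shows "\<forall>\<^sub>F s in at_right 0. dist (\<psi> (p + s *\<^sub>R v)) c < dist (\<psi> p) c"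
proof -
  define h where "h s = (\<psi> (p + s *\<^sub>R v) - c) \<bullet> (\<psi> (p + s *\<^sub>R v) - c)" for s
  have "linear D" using deriv by (rule has_derivative_linear)
  have "((\<lambda>s. p + s *\<^sub>R v) has_derivative (\<lambda>s. s *\<^sub>R v)) (at 0)"
    by (auto intro!: derivative_eq_intros)
  moreover have "(\<psi> has_derivative D) (at (p + 0 *\<^sub>R v))" using deriv by simp
  ultimately have "((\<lambda>s. \<psi> (p + s *\<^sub>R v)) has_derivative (\<lambda>s. D (s *\<^sub>R v))) (at 0)"
    by (rule has_derivative_compose)
  then have "((\<lambda>s. \<psi> (p + s *\<^sub>R v) - c) has_derivative (\<lambda>s. s *\<^sub>R D v)) (at 0)"
    by (rule has_derivative_diff[OF _ has_derivative_const, THEN has_derivative_eq_rhs])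
      (simp add: linear_scale[OF \<open>linear D\<close>])
  from has_derivative_inner[OF this this]
  have "(h has_real_derivative 2 * ((\<psi> p - c) \<bullet> D v)) (at 0)"
    unfolding has_field_derivative_def h_def
    by (rule has_derivative_eq_rhs) (auto simp: fun_eq_iff inner_commute algebra_simps)
  moreover have "2 * ((\<psi> p - c) \<bullet> D v) < 0" using descent by simp
  ultimately obtain d where "d > 0" and "\<forall>s>0. s < d \<longrightarrow> h 0 > h (0 + s)"
    using DERIV_neg_dec_right by blast
  then have "\<forall>\<^sub>F s in at_right 0. h s < h 0"
    by (auto simp: eventually_at_right_field)
  then show ?thesis
    by eventually_elim
      (simp add: h_def dist_norm power2_norm_eq_inner[symmetric] power_less_imp_less_base)
qed

lemma C2_atlas_chartD:
  assumes "C2_atlas M0 A" "(V, \<phi>) \<in> A"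
  shows "openin (top_of_set M0) V" "open (\<phi> ` V)" "homeomorphism V (\<phi> ` V) \<phi> (inv_into V \<phi>)"
  using assms unfolding C2_atlas_def by (auto dest!: bspec[OF _ assms(2)])

lemma C2_atlas_chart_at:
  assumes "C2_atlas M0 A" "y \<in> M0"
  obtains V \<phi> where "(V, \<phi>) \<in> A" "y \<in> V"
proof -
  obtain P where "P \<in> A" "y \<in> fst P"
    using assms unfolding C2_atlas_def by blast
  then show ?thesis using that by (metis prod.collapse)
qed

lemma C2_immersion_curv_bound_chart_differentiable:
  assumes "C2_immersion_curv_bound M0 A u \<rho>" "(V, \<phi>) \<in> A" "p \<in> \<phi> ` V"
  shows "(u \<circ> inv_into V \<phi>) differentiable (at p)"
proof -
  obtain \<psi>' \<psi>'' where "has_2nd_derivs (\<phi> ` V) (u \<circ> inv_into V \<phi>) \<psi>' \<psi>''"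
    using assms(1,2) unfolding C2_immersion_curv_bound_def by (smt (verit) case_prodD)
  then show ?thesis
    using assms(3) unfolding has_2nd_derivs_def differentiable_def by blast
qed

lemma continuous_on_if_differentiable_in_charts:
  assumes atlas: "C2_atlas M0 A"
    and diff: "\<And>V \<phi> p. (V, \<phi>) \<in> A \<Longrightarrow> p \<in> \<phi> ` V \<Longrightarrow> (u \<circ> inv_into V \<phi>) differentiable (at p)"
  shows "continuous_on M0 u"
  unfolding continuous_on_eq_continuous_within
proof
  fix y assume "y \<in> M0"
  with atlas obtain V \<phi> where chart: "(V, \<phi>) \<in> A" "y \<in> V" by (rule C2_atlas_chart_at)
  note V = C2_atlas_chartD[OF atlas chart(1)]
  have "continuous_on (\<phi> ` V) (u \<circ> inv_into V \<phi>)"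
    using diff[OF chart(1)]
    by (blast intro: differentiable_imp_continuous_on differentiable_at_imp_differentiable_on)
  moreover have "continuous_on V \<phi>" using V(3) by (rule homeomorphism_cont1)
  ultimately have "continuous_on V ((u \<circ> inv_into V \<phi>) \<circ> \<phi>)"
    by (rule continuous_on_compose[rotated])
  moreover have "((u \<circ> inv_into V \<phi>) \<circ> \<phi>) z = u z" if "z \<in> V" for z
    using V(3) that by (simp add: homeomorphism_apply1)
  ultimately have "continuous_on V u" using continuous_on_cong by force
  then have "continuous (at y within V) u"
    using chart(2) by (simp add: continuous_on_eq_continuous_within)
  moreover obtain T where "open T" "V = M0 \<inter> T" using V(1) openin_open by blast
  then have "at y within V = at y within M0"
    using chart(2) by (intro at_within_nhd[of y T]) auto
  ultimately show "continuous (at y within M0) u" by simp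
qed

lemma descent_from_nonnormal_tangent:
  assumes atlas: "C2_atlas M0 A"
    and diff: "\<And>V \<phi> p. (V, \<phi>) \<in> A \<Longrightarrow> p \<in> \<phi> ` V \<Longrightarrow> (u \<circ> inv_into V \<phi>) differentiable (at p)"
    and t: "t \<in> tangent_space A u y" and not_normal: "(c - u y) \<bullet> t \<noteq> 0"
  obtains K where "connected K" "K \<subseteq> M0" "y \<in> K"
    "\<forall>z\<in>K. dist (u z) c \<le> dist (u y) c" "\<exists>z\<in>K. dist (u z) c < dist (u y) c"
proof -
  obtain V \<phi> where chart: "(V, \<phi>) \<in> A" "y \<in> V"
    and t_range: "t \<in> range (frechet_derivative (u \<circ> inv_into V \<phi>) (at (\<phi> y)))"
    using t unfolding tangent_space_def by blast
  note V = C2_atlas_chartD[OF atlas chart(1)]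
  define \<psi> where "\<psi> = u \<circ> inv_into V \<phi>"
  define p where "p = \<phi> y"
  define D where "D = frechet_derivative \<psi> (at p)"
  have "p \<in> \<phi> ` V" unfolding p_def using chart(2) by blast
  have deriv: "(\<psi> has_derivative D) (at p)"
    unfolding D_def \<psi>_def using diff[OF chart(1) \<open>p \<in> \<phi> ` V\<close>]
    by (rule frechet_derivative_works[THEN iffD1])
  then have "linear D" by (rule has_derivative_linear)
  have inv_\<phi>: "inv_into V \<phi> (\<phi> z) = z" if "z \<in> V" for z
    using V(3) that by (simp add: homeomorphism_apply1)
  have "\<psi> p = u y" unfolding \<psi>_def p_def using inv_\<phi>[OF chart(2)] by simp
  obtain w where "t = D w" using t_range unfolding D_def \<psi>_def p_def by auto
  obtain v where descent: "(\<psi> p - c) \<bullet> D v < 0"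
  proof (cases "(\<psi> p - c) \<bullet> D w < 0")
    case False
    moreover have "D (- w) = - D w" using linear_neg[OF \<open>linear D\<close>] .
    ultimately show ?thesis
      using that[of "- w"] not_normal \<open>t = D w\<close> \<open>\<psi> p = u y\<close>
      by (auto simp: inner_diff_left inner_minus_right)
  qed
  have "\<forall>\<^sub>F s in at_right 0. p + s *\<^sub>R v \<in> \<phi> ` V"
  proof -
    have "((\<lambda>s. p + s *\<^sub>R v) \<longlongrightarrow> p) (at_right 0)"
      by (auto intro!: tendsto_eq_intros)
    then show ?thesis using V(2) \<open>p \<in> \<phi> ` V\<close> by (rule topological_tendstoD)
  qed
  moreover note eventually_dist_decreasing_along[OF deriv descent]
  ultimately have "\<forall>\<^sub>F s in at_right 0.
      p + s *\<^sub>R v \<in> \<phi> ` V \<and> dist (\<psi> (p + s *\<^sub>R v)) c < dist (\<psi> p) c"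
    by (rule eventually_conj)
  then obtain b where "b > 0" and b: "\<And>s. 0 < s \<Longrightarrow> s < b \<Longrightarrow>
      p + s *\<^sub>R v \<in> \<phi> ` V \<and> dist (\<psi> (p + s *\<^sub>R v)) c < dist (\<psi> p) c"
    by (auto simp: eventually_at_right_field)
  define \<gamma> where "\<gamma> s = inv_into V \<phi> (p + s *\<^sub>R v)" for s
  define K where "K = \<gamma> ` {0..b/2}"
  have segment: "p + s *\<^sub>R v \<in> \<phi> ` V" if "s \<in> {0..b/2}" for s
    using that b[of s] \<open>b > 0\<close> \<open>p \<in> \<phi> ` V\<close> by (cases "s = 0") auto
  have descends: "dist (u (\<gamma> s)) c < dist (u y) c" if "0 < s" "s \<le> b/2" for s
    using that b[of s] \<open>\<psi> p = u y\<close> unfolding \<gamma>_def \<psi>_def by simp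
  have "\<gamma> 0 = y" unfolding \<gamma>_def p_def using inv_\<phi>[OF chart(2)] by simp
  have "continuous_on {0..b/2} \<gamma>"
    unfolding \<gamma>_def
    by (rule continuous_on_compose2[OF homeomorphism_cont2[OF V(3)]])
      (auto intro!: continuous_intros segment)
  then have "connected K" unfolding K_def by (rule connected_continuous_image) simp
  moreover have "K \<subseteq> M0"
    using segment homeomorphism_image2[OF V(3)] openin_imp_subset[OF V(1)]
    unfolding K_def \<gamma>_def by blast
  moreover have "y \<in> K" unfolding K_def using \<open>\<gamma> 0 = y\<close> \<open>b > 0\<close> by force
  moreover have "\<forall>z\<in>K. dist (u z) c \<le> dist (u y) c"
    unfolding K_def using descends \<open>\<gamma> 0 = y\<close> by (force simp: le_less)
  moreover have "\<exists>z\<in>K. dist (u z) c < dist (u y) c"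
    unfolding K_def using descends[of "b/2"] \<open>b > 0\<close> by force
  ultimately show ?thesis by (rule that)
qed

theorem lemma2p6:
  fixes M0 :: "'m::t2_space set"
    and A :: "('m set \<times> ('m \<Rightarrow> 'd::euclidean_space)) set"
    and u :: "'m \<Rightarrow> 'e::euclidean_space"
    and \<rho> r :: real and x0 :: 'm
  assumes "C2_immersion_curv_bound M0 A u \<rho>"
    and "\<rho> > 0"
    and "x0 \<in> M0"
    and "r > 0"
    and "ereal r < normal_reach M0 A u x0"
  shows "connected {y0 \<in> M0. u y0 \<in> cball (u x0) r}"
proof -
  define S where "S = {y0 \<in> M0. u y0 \<in> cball (u x0) r}"
  have atlas: "C2_atlas M0 A" and "compact M0"
    using assms(1) unfolding C2_immersion_curv_bound_def by auto
  note diff = C2_immersion_curv_bound_chart_differentiable[OF assms(1)]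
  have "continuous_on M0 u" using atlas diff by (rule continuous_on_if_differentiable_in_charts)
  then have "closedin (top_of_set M0) S"
    unfolding S_def using continuous_closedin_preimage[of M0 u "cball (u x0) r"]
    by (simp add: vimage_def Int_def)
  then have "compact S" by (rule closedin_compact[OF \<open>compact M0\<close>])
  moreover have "continuous_on S (\<lambda>z. dist (u z) (u x0))"
    using \<open>continuous_on M0 u\<close> unfolding S_def
    by (auto intro!: continuous_intros elim: continuous_on_subset)
  moreover have "x0 \<in> S" unfolding S_def using assms(3,4) by simp
  ultimately show ?thesis
    unfolding S_def[symmetric]
  proof (rule connectedI_by_descent)
    fix y assume "y \<in> S" "y \<noteq> x0"
    then have "y \<in> M0" and "dist (u x0) (u y) \<le> r" unfolding S_def by auto
    have "y \<notin> normal_set M0 A u x0"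
    proof
      assume "y \<in> normal_set M0 A u x0"
      then have "normal_reach M0 A u x0 \<le> ereal r"
        unfolding normal_reach_def using \<open>dist (u x0) (u y) \<le> r\<close> by (auto intro: INF_lower2)
      then show False using assms(5) by simp
    qed
    then obtain t where "t \<in> tangent_space A u y" "(u x0 - u y) \<bullet> t \<noteq> 0"
      using \<open>y \<in> M0\<close> \<open>y \<noteq> x0\<close> unfolding normal_set_def by auto
    with atlas diff obtain K where K: "connected K" "K \<subseteq> M0" "y \<in> K"
      "\<forall>z\<in>K. dist (u z) (u x0) \<le> dist (u y) (u x0)"
      "\<exists>z\<in>K. dist (u z) (u x0) < dist (u y) (u x0)"
      by (rule descent_from_nonnormal_tangent)
    moreover have "K \<subseteq> S"
      using K(2,4) \<open>dist (u x0) (u y) \<le> r\<close> unfolding S_def by (force simp: dist_commute)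
    ultimately show "\<exists>K. connected K \<and> K \<subseteq> S \<and> y \<in> K \<and>
        (\<exists>z\<in>K. dist (u z) (u x0) < dist (u y) (u x0))"
      by blast
  qed
qed

end
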